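(* For the reduced system $\dot x=G(x)$ (context), with the stated parameter inequalities, let $J(x)=\partial G/\partial x$ be the Jacobian at $x=(\mu_{34},s,\mu_{200},z)\in(0,\infty)^4$, with indices ordered as $(\mu_{34},s,\mu_{200},z)$. Then, for every $x\in(0,\infty)^4$: $J_{13}=J_{23}=J_{24}=J_{31}=J_{41}=0$; $J_{12}<0$, $J_{14}<0$, $J_{32}<0$, $J_{34}<0$; $J_{21}=\partial\dot s/\partial\mu_{34}<0$, $J_{43}=\partial \dot z/\partial\mu_{200}<0$; $J_{42}=\partial\dot z/\partial s>0$. In particular, with $\sigma=(-1,1,-1,1)$ and $\Sigma=\mathrm{diag}(\sigma)$, the matrix $\Sigma J(x)\Sigma$ is Metzler (all off-diagonal entries nonnegative) for every $x\in(0,\infty)^4$, and $J(x)$ is irreducible for every $x\in(0,\infty)^4$.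
   Context: All of the following are positive real parameters: $A_s, A_z, E_{34}, E_{200}, E_S, E_Z, \beta_{34}, \beta_{-34}, \beta_{200}, \beta_{-200}, \gamma_s, \gamma_z, c_s, c_{-s}, c_z, c_{-z}, \beta_s, \beta_{s1}, \beta_{s2}, \beta_z, \beta_{z1}, \beta_{z2}, k_s, k_{s1}, k_{s2}, k_{-s}, k_z, k_{z1}, k_{z2}, k_{-z}, \delta_z$. They satisfy $\beta_s<\beta_{s1}<\beta_{s2}$, $\beta_z<\beta_{z1}<\beta_{z2}$, $k_s>k_{s1}>k_{s2}$ and $k_z>k_{z1}>k_{z2}$. For $\rho\in\{s,z\}$ define $e_{\rho1}=\beta_{\rho1}\beta_{\rho2}+(\beta_{\rho1}+\beta_{\rho2})c_{-\rho}+c_{-\rho}^2$, $e_{\rho2}=c_\rho(\beta_{\rho2}+c_{-\rho})$, $e_{\rho3}=\beta_\rho\beta_{\rho2}+\beta_{\rho1}\beta_{\rho2}+\beta_{\rho1}c_{-\rho}$, $\Delta_\rho(\mu)=\beta_{\rho2}c_\rho^2\mu^2+e_{\rho3}c_\rho\mu+e_{\rho1}\beta_\rho$, and $N_\rho(\mu)=\dfrac{k_\rho(\beta_{\rho2}c_\rho\mu+e_{\rho1})+k_{\rho1}e_{\rho2}\mu+k_{\rho2}c_\rho^2\mu^2}{\Delta_\rho(\mu)}$ for $\mu\ge 0$. The reduced system $\dot x=G(x)$, $x=(\mu_{34},s,\mu_{200},z)$, is $\dot\mu_{34}=\dfrac{\beta_{34}E_{34}A_sA_z}{(s^2+A_s)(z^2+A_z)}-\beta_{-34}\mu_{34}$,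 $\dot s=\dfrac{\gamma_sE_SA_s}{s^2+A_s}N_s(\mu_{34})-k_{-s}s$, $\dot\mu_{200}=\dfrac{\beta_{200}E_{200}A_sA_z}{(s^2+A_s)(z^2+A_z)}-\beta_{-200}\mu_{200}$, $\dot z=\delta_z+\dfrac{\gamma_zE_Zs^2z^2}{(s^2+A_s)(z^2+A_z)}N_z(\mu_{200})-k_{-z}z$. *)

theory Defs
  imports "HOL-Analysis.Analysis"
begin

record params =
  As :: real  Az :: real  E34 :: real  E200 :: real  ES :: real  EZ :: real
  b34 :: real  bm34 :: real  b200 :: real  bm200 :: real
  gs :: real  gz :: real  cs :: real  cms :: real  cz :: real  cmz :: real
  bs :: real  bs1 :: real  bs2 :: real  bz :: real  bz1 :: real  bz2 :: real
  ks :: real  ks1 :: real  ks2 :: real  kms :: real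
  kz :: real  kz1 :: real  kz2 :: real  kmz :: real  dz :: real

definition admissible :: "params \<Rightarrow> bool" where
  "admissible p \<longleftrightarrow>
     0 < As p \<and> 0 < Az p \<and> 0 < E34 p \<and> 0 < E200 p \<and> 0 < ES p \<and> 0 < EZ p \<and>
     0 < b34 p \<and> 0 < bm34 p \<and> 0 < b200 p \<and> 0 < bm200 p \<and>
     0 < gs p \<and> 0 < gz p \<and> 0 < cs p \<and> 0 < cms p \<and> 0 < cz p \<and> 0 < cmz p \<and>
     0 < bs p \<and> 0 < bs1 p \<and> 0 < bs2 p \<and> 0 < bz p \<and> 0 < bz1 p \<and> 0 < bz2 p \<and>
     0 < ks p \<and> 0 < ks1 p \<and> 0 < ks2 p \<and> 0 < kms p \<and>
     0 < kz p \<and> 0 < kz1 p \<and> 0 < kz2 p \<and> 0 < kmz p \<and> 0 < dz p \<and>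
     bs p < bs1 p \<and> bs1 p < bs2 p \<and> bz p < bz1 p \<and> bz1 p < bz2 p \<and>
     ks p > ks1 p \<and> ks1 p > ks2 p \<and> kz p > kz1 p \<and> kz1 p > kz2 p"

definition e1 :: "real \<Rightarrow> real \<Rightarrow> real \<Rightarrow> real \<Rightarrow> real \<Rightarrow> real" where
  "e1 b b1 b2 c cm = b1 * b2 + (b1 + b2) * cm + cm\<^sup>2"
definition e2 :: "real \<Rightarrow> real \<Rightarrow> real \<Rightarrow> real \<Rightarrow> real \<Rightarrow> real" where
  "e2 b b1 b2 c cm = c * (b2 + cm)"
definition e3 :: "real \<Rightarrow> real \<Rightarrow> real \<Rightarrow> real \<Rightarrow> real \<Rightarrow> real" where
  "e3 b b1 b2 c cm = b * b2 + b1 * b2 + b1 * cm"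
definition Dlt :: "real \<Rightarrow> real \<Rightarrow> real \<Rightarrow> real \<Rightarrow> real \<Rightarrow> real \<Rightarrow> real" where
  "Dlt b b1 b2 c cm mu = b2 * c\<^sup>2 * mu\<^sup>2 + e3 b b1 b2 c cm * c * mu + e1 b b1 b2 c cm * b"
definition Nf :: "real \<Rightarrow> real \<Rightarrow> real \<Rightarrow> real \<Rightarrow> real \<Rightarrow> real \<Rightarrow> real \<Rightarrow> real \<Rightarrow> real \<Rightarrow> real" where
  "Nf k k1 k2 b b1 b2 c cm mu =
     (k * (b2 * c * mu + e1 b b1 b2 c cm) + k1 * e2 b b1 b2 c cm * mu + k2 * c\<^sup>2 * mu\<^sup>2)
     / Dlt b b1 b2 c cm mu"

definition Ns :: "params \<Rightarrow> real \<Rightarrow> real" where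
  "Ns p mu = Nf (ks p) (ks1 p) (ks2 p) (bs p) (bs1 p) (bs2 p) (cs p) (cms p) mu"
definition Nz :: "params \<Rightarrow> real \<Rightarrow> real" where
  "Nz p mu = Nf (kz p) (kz1 p) (kz2 p) (bz p) (bz1 p) (bz2 p) (cz p) (cmz p) mu"

definition Gc :: "params \<Rightarrow> nat \<Rightarrow> (nat \<Rightarrow> real) \<Rightarrow> real" where
  "Gc p i x = (let m34 = x 1; s = x 2; m200 = x 3; z = x 4 in
     if i = 1 then b34 p * E34 p * As p * Az p / ((s\<^sup>2 + As p) * (z\<^sup>2 + Az p)) - bm34 p * m34
     else if i = 2 then gs p * ES p * As p / (s\<^sup>2 + As p) * Ns p m34 - kms p * s
     else if i = 3 then b200 p * E200 p * As p * Az p / ((s\<^sup>2 + As p) * (z\<^sup>2 + Az p)) - bm200 p * m200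
     else if i = 4 then dz p + gz p * EZ p * s\<^sup>2 * z\<^sup>2 / ((s\<^sup>2 + As p) * (z\<^sup>2 + Az p)) * Nz p m200 - kmz p * z
     else 0)"

definition jac :: "params \<Rightarrow> (nat \<Rightarrow> real) \<Rightarrow> nat \<Rightarrow> nat \<Rightarrow> real" where
  "jac p x i j = deriv (\<lambda>t. Gc p i (x(j := t))) (x j)"

definition metzler :: "nat \<Rightarrow> (nat \<Rightarrow> nat \<Rightarrow> real) \<Rightarrow> bool" where
  "metzler n M \<longleftrightarrow> (\<forall>i\<in>{1..n}. \<forall>j\<in>{1..n}. i \<noteq> j \<longrightarrow> 0 \<le> M i j)"

definition reducible_mat :: "nat \<Rightarrow> (nat \<Rightarrow> nat \<Rightarrow> real) \<Rightarrow> bool" where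
  "reducible_mat n M \<longleftrightarrow> (\<exists>\<pi> k. \<pi> permutes {1..n} \<and> 1 \<le> k \<and> k < n \<and>
      (\<forall>i j. k < i \<and> i \<le> n \<and> 1 \<le> j \<and> j \<le> k \<longrightarrow> M (\<pi> i) (\<pi> j) = 0))"
definition irreducible_mat :: "nat \<Rightarrow> (nat \<Rightarrow> nat \<Rightarrow> real) \<Rightarrow> bool" where
  "irreducible_mat n M \<longleftrightarrow> \<not> reducible_mat n M"

definition sigma :: "nat \<Rightarrow> real" where
  "sigma i = (if i = 1 \<or> i = 3 then -1 else 1)"

end

theory Submission
  imports Defs
begin

text \<open>Each off-diagonal partial derivative of \<open>G\<close> that is not identically zero sees the
  varied coordinate through a single factor:
  \<open>1/(v\<^sup>2 + A)\<close> (decreasing) in rows 1 and 3, \<open>s\<^sup>2/(s\<^sup>2 + A\<^sub>s)\<close> (increasing) in \<open>J\<^sub>4\<^sub>2\<close>, and the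
  response function \<open>N\<close> in \<open>J\<^sub>2\<^sub>1\<close> and \<open>J\<^sub>4\<^sub>3\<close>. By the quotient rule the numerator of \<open>N'(\<mu>)\<close>
  is a quadratic in \<open>\<mu>\<close> whose coefficients are built from the cross terms
  \<open>k\<^sub>1\<beta> - k\<beta>\<^sub>1\<close>, \<open>k\<^sub>2\<beta> - k\<beta>\<^sub>2\<close>, \<open>k\<^sub>2\<beta>\<^sub>1 - k\<^sub>1\<beta>\<^sub>2\<close>, all negative because the \<open>k\<close>'s decrease
  while the \<open>\<beta>\<close>'s increase; so \<open>N\<close> is strictly decreasing. Every nonzero off-diagonal
  entry \<open>J\<^sub>i\<^sub>j\<close> has the sign of \<open>\<sigma>\<^sub>i\<sigma>\<^sub>j\<close>, which is the Metzler property of \<open>\<Sigma>J\<Sigma>\<close>.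
  For irreducibility, read \<open>J\<^sub>i\<^sub>j \<noteq> 0\<close> as an edge \<open>j \<rightarrow> i\<close>: index 2 reaches 1, 3 and 4
  directly and is reached along \<open>3 \<rightarrow> 4 \<rightarrow> 1 \<rightarrow> 2\<close>, so no proper nonempty set of indices
  is closed under incoming edges.\<close>

lemma Dlt_pos:
  fixes b b1 b2 c cm mu :: real
  assumes "0 < b" "0 < b1" "0 < b2" "0 < c" "0 < cm" "0 \<le> mu"
  shows "0 < Dlt b b1 b2 c cm mu"
  using assms unfolding Dlt_def e1_def e3_def
  by (intro add_nonneg_pos add_nonneg_nonneg mult_pos_pos) auto

lemma Nf_pos:
  fixes k k1 k2 b b1 b2 c cm mu :: real
  assumes "0 < k" "0 < k1" "0 < k2" "0 < b" "0 < b1" "0 < b2" "0 < c" "0 < cm" "0 \<le> mu"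
  shows "0 < Nf k k1 k2 b b1 b2 c cm mu"
  using assms Dlt_pos[of b b1 b2 c cm mu] unfolding Nf_def e1_def e2_def
  by (intro divide_pos_pos add_pos_nonneg add_nonneg_pos mult_pos_pos) auto

lemma Nf_has_real_derivative:
  fixes k k1 k2 b b1 b2 c cm mu :: real
  defines "E \<equiv> e1 b b1 b2 c cm"
  assumes "Dlt b b1 b2 c cm mu \<noteq> 0"
  shows "(Nf k k1 k2 b b1 b2 c cm has_real_derivative
     (E * c * (b2 + cm) * (k1 * b - k * b1) + 2 * c\<^sup>2 * E * (k2 * b - k * b2) * mu
      + c ^ 3 * ((k2 * b - k * b2) * b2 + (k2 * b1 - k1 * b2) * (b2 + cm)) * mu\<^sup>2)
     / (Dlt b b1 b2 c cm mu)\<^sup>2) (at mu)"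
proof -
  have "(Nf k k1 k2 b b1 b2 c cm has_real_derivative
     ((k * b2 * c + k1 * e2 b b1 b2 c cm + 2 * k2 * c\<^sup>2 * mu) * Dlt b b1 b2 c cm mu
      - (k * (b2 * c * mu + E) + k1 * e2 b b1 b2 c cm * mu + k2 * c\<^sup>2 * mu\<^sup>2)
        * (2 * b2 * c\<^sup>2 * mu + e3 b b1 b2 c cm * c))
     / (Dlt b b1 b2 c cm mu)\<^sup>2) (at mu)"
    unfolding Nf_def[abs_def] E_def
    using assms(2) unfolding Dlt_def
    by (auto intro!: derivative_eq_intros simp: power2_eq_square algebra_simps)
  moreover have "(k * b2 * c + k1 * e2 b b1 b2 c cm + 2 * k2 * c\<^sup>2 * mu) * Dlt b b1 b2 c cm mu
      - (k * (b2 * c * mu + E) + k1 * e2 b b1 b2 c cm * mu + k2 * c\<^sup>2 * mu\<^sup>2)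
        * (2 * b2 * c\<^sup>2 * mu + e3 b b1 b2 c cm * c)
    = E * c * (b2 + cm) * (k1 * b - k * b1) + 2 * c\<^sup>2 * E * (k2 * b - k * b2) * mu
      + c ^ 3 * ((k2 * b - k * b2) * b2 + (k2 * b1 - k1 * b2) * (b2 + cm)) * mu\<^sup>2"
    unfolding E_def Dlt_def e1_def e2_def e3_def
    by (simp add: algebra_simps power2_eq_square power3_eq_cube)
  ultimately show ?thesis by simp
qed

lemma Nf_derivative_numerator_neg:
  fixes k k1 k2 b b1 b2 c cm mu E :: real
  assumes "0 < b" "b < b1" "b1 < b2" "0 < c" "0 < cm" "0 < k2" "k2 < k1" "k1 < k"
    and "0 < E" "0 \<le> mu"
  shows "E * c * (b2 + cm) * (k1 * b - k * b1) + 2 * c\<^sup>2 * E * (k2 * b - k * b2) * mu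
      + c ^ 3 * ((k2 * b - k * b2) * b2 + (k2 * b1 - k1 * b2) * (b2 + cm)) * mu\<^sup>2 < 0"
proof -
  have "k1 * b < k * b1" "k2 * b < k * b2" "k2 * b1 < k1 * b2"
    using assms by (simp_all add: mult_strict_mono)
  then have bracket: "(k2 * b - k * b2) * b2 + (k2 * b1 - k1 * b2) * (b2 + cm) < 0"
    using assms by (intro add_neg_neg mult_neg_pos) auto
  have "E * c * (b2 + cm) * (k1 * b - k * b1) < 0"
    using assms \<open>k1 * b < k * b1\<close> by (intro mult_pos_neg) auto
  moreover have "2 * c\<^sup>2 * E * (k2 * b - k * b2) * mu \<le> 0"
    by (rule mult_nonpos_nonneg[OF less_imp_le[OF mult_pos_neg]])
       (use assms \<open>k2 * b < k * b2\<close> in auto)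
  moreover have "c ^ 3 * ((k2 * b - k * b2) * b2 + (k2 * b1 - k1 * b2) * (b2 + cm)) * mu\<^sup>2 \<le> 0"
    by (rule mult_nonpos_nonneg[OF less_imp_le[OF mult_pos_neg]]) (use assms bracket in auto)
  ultimately show ?thesis by linarith
qed

lemma Nf_has_negative_derivative:
  fixes k k1 k2 b b1 b2 c cm mu :: real
  assumes "0 < b" "b < b1" "b1 < b2" "0 < c" "0 < cm" "0 < k2" "k2 < k1" "k1 < k" "0 \<le> mu"
  obtains D where "(Nf k k1 k2 b b1 b2 c cm has_real_derivative D) (at mu)" "D < 0"
proof -
  have "0 < Dlt b b1 b2 c cm mu" "0 < e1 b b1 b2 c cm"
    using assms Dlt_pos[of b b1 b2 c cm mu] by (auto simp: e1_def intro!: add_pos_pos)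
  then show ?thesis
    by (intro that[OF Nf_has_real_derivative])
       (use assms Nf_derivative_numerator_neg in \<open>auto intro!: divide_neg_pos\<close>)
qed

lemma Ns_has_negative_derivative:
  assumes "admissible p" "0 \<le> mu"
  obtains D where "(Ns p has_real_derivative D) (at mu)" "D < 0"
  using assms
    Nf_has_negative_derivative[of "bs p" "bs1 p" "bs2 p" "cs p" "cms p" "ks2 p" "ks1 p" "ks p" mu]
  unfolding admissible_def Ns_def[abs_def] by auto

lemma Nz_has_negative_derivative:
  assumes "admissible p" "0 \<le> mu"
  obtains D where "(Nz p has_real_derivative D) (at mu)" "D < 0"
  using assms
    Nf_has_negative_derivative[of "bz p" "bz1 p" "bz2 p" "cz p" "cmz p" "kz2 p" "kz1 p" "kz p" mu]
  unfolding admissible_def Nz_def[abs_def] by auto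

lemma Nz_pos:
  assumes "admissible p" "0 \<le> mu"
  shows "0 < Nz p mu"
  using assms unfolding admissible_def Nz_def by (auto intro!: Nf_pos)

lemma square_plus_pos: "0 < (a::real) \<Longrightarrow> 0 < t\<^sup>2 + a"
  by (simp add: add_nonneg_pos)

lemma has_real_derivative_inverse_square_plus:
  fixes a t :: real
  assumes "0 < a"
  shows "((\<lambda>t. 1 / (t\<^sup>2 + a)) has_real_derivative - (2 * t / (t\<^sup>2 + a)\<^sup>2)) (at t)"
proof -
  have "t\<^sup>2 + a \<noteq> 0" using square_plus_pos[OF assms, of t] by simp
  then show ?thesis by (auto intro!: derivative_eq_intros simp: power2_eq_square)
qed

lemma has_real_derivative_square_saturation:
  fixes a t :: real
  assumes "0 < a"
  shows "((\<lambda>t. t\<^sup>2 / (t\<^sup>2 + a)) has_real_derivative 2 * a * t / (t\<^sup>2 + a)\<^sup>2) (at t)"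
proof -
  have "t\<^sup>2 + a \<noteq> 0" using square_plus_pos[OF assms, of t] by simp
  then show ?thesis by (auto intro!: derivative_eq_intros simp: power2_eq_square algebra_simps)
qed

lemma jac_eq_affine:
  assumes "\<And>t. Gc p i (x(j := t)) = C * h t + d"
    and "(h has_real_derivative D) (at (x j))"
  shows "jac p x i j = C * D"
proof -
  have "((\<lambda>t. Gc p i (x(j := t))) has_real_derivative C * D) (at (x j))"
    unfolding assms(1) by (auto intro!: derivative_eq_intros assms(2))
  then show ?thesis unfolding jac_def by (rule DERIV_imp_deriv)
qed

lemma Gc_partial_differentiable:
  assumes "admissible p" and "0 \<le> x 1" "0 \<le> x 3"
  shows "(\<lambda>t. Gc p i (x(j := t))) differentiable (at (x j))"
proof -
  have "Ns p differentiable (at (x 1))" "Nz p differentiable (at (x 3))"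
    using Ns_has_negative_derivative[OF assms(1,2)] Nz_has_negative_derivative[OF assms(1,3)]
    by (metis real_differentiable_def)+
  moreover have "t\<^sup>2 + As p \<noteq> 0" "t\<^sup>2 + Az p \<noteq> 0" for t
    using assms(1) square_plus_pos unfolding admissible_def by (metis less_irrefl)+
  ultimately show ?thesis
    unfolding Gc_def Let_def
    by (cases "i \<in> {1, 2, 3, 4}"; cases "j \<in> {1, 2, 3, 4}"; auto intro!: derivative_intros)
qed

lemma jac_structural_zeros:
  "jac p x 1 3 = 0" "jac p x 2 3 = 0" "jac p x 2 4 = 0" "jac p x 3 1 = 0" "jac p x 4 1 = 0"
  by (simp_all add: jac_def Gc_def)

lemma jac_repression_entries_neg:
  assumes "admissible p" and "0 < x 2" "0 < x 4"
  shows "jac p x 1 2 < 0" "jac p x 1 4 < 0" "jac p x 3 2 < 0" "jac p x 3 4 < 0"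
proof -
  have neg: "K / (w\<^sup>2 + B) * - (2 * v / (v\<^sup>2 + A)\<^sup>2) < 0"
    if "0 < K" "0 < A" "0 < B" "0 < v" for K A B v w :: real
    using that square_plus_pos[of A v] square_plus_pos[of B w]
    by (intro mult_pos_neg divide_pos_pos) auto
  have A: "0 < As p" "0 < Az p"
    "0 < b34 p * E34 p * As p * Az p" "0 < b200 p * E200 p * As p * Az p"
    using assms(1) by (simp_all add: admissible_def)
  have "jac p x 1 2 = b34 p * E34 p * As p * Az p / ((x 4)\<^sup>2 + Az p)
      * - (2 * x 2 / ((x 2)\<^sup>2 + As p)\<^sup>2)"
    by (rule jac_eq_affine[where h = "\<lambda>t. 1 / (t\<^sup>2 + As p)" and d = "- bm34 p * x 1"])
       (simp_all add: Gc_def has_real_derivative_inverse_square_plus A)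
  moreover have "jac p x 3 2 = b200 p * E200 p * As p * Az p / ((x 4)\<^sup>2 + Az p)
      * - (2 * x 2 / ((x 2)\<^sup>2 + As p)\<^sup>2)"
    by (rule jac_eq_affine[where h = "\<lambda>t. 1 / (t\<^sup>2 + As p)" and d = "- bm200 p * x 3"])
       (simp_all add: Gc_def has_real_derivative_inverse_square_plus A)
  moreover have "jac p x 1 4 = b34 p * E34 p * As p * Az p / ((x 2)\<^sup>2 + As p)
      * - (2 * x 4 / ((x 4)\<^sup>2 + Az p)\<^sup>2)"
    by (rule jac_eq_affine[where h = "\<lambda>t. 1 / (t\<^sup>2 + Az p)" and d = "- bm34 p * x 1"])
       (simp_all add: Gc_def has_real_derivative_inverse_square_plus A mult.commute)
  moreover have "jac p x 3 4 = b200 p * E200 p * As p * Az p / ((x 2)\<^sup>2 + As p)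
      * - (2 * x 4 / ((x 4)\<^sup>2 + Az p)\<^sup>2)"
    by (rule jac_eq_affine[where h = "\<lambda>t. 1 / (t\<^sup>2 + Az p)" and d = "- bm200 p * x 3"])
       (simp_all add: Gc_def has_real_derivative_inverse_square_plus A mult.commute)
  ultimately show "jac p x 1 2 < 0" "jac p x 1 4 < 0" "jac p x 3 2 < 0" "jac p x 3 4 < 0"
    using assms(2,3) A neg by simp_all
qed

lemma jac_2_1_neg:
  assumes "admissible p" and "0 \<le> x 1"
  shows "jac p x 2 1 < 0"
proof -
  obtain D where D: "(Ns p has_real_derivative D) (at (x 1))" "D < 0"
    using Ns_has_negative_derivative assms by blast
  have "jac p x 2 1 = gs p * ES p * As p / ((x 2)\<^sup>2 + As p) * D"
    by (rule jac_eq_affine[where x = x and j = 1 and h = "Ns p" and d = "- kms p * x 2",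
          OF _ D(1)])
       (simp add: Gc_def Let_def)
  moreover have "0 < gs p * ES p * As p / ((x 2)\<^sup>2 + As p)"
    using assms(1) square_plus_pos[of "As p" "x 2"] by (simp add: admissible_def)
  ultimately show ?thesis using D(2) by (metis mult_pos_neg)
qed

lemma jac_4_3_neg:
  assumes "admissible p" and "0 < x 2" "0 \<le> x 3" "0 < x 4"
  shows "jac p x 4 3 < 0"
proof -
  obtain D where D: "(Nz p has_real_derivative D) (at (x 3))" "D < 0"
    using Nz_has_negative_derivative assms by blast
  have "jac p x 4 3
      = gz p * EZ p * (x 2)\<^sup>2 * (x 4)\<^sup>2 / (((x 2)\<^sup>2 + As p) * ((x 4)\<^sup>2 + Az p)) * D"
    by (rule jac_eq_affine[where x = x and j = 3 and h = "Nz p" and d = "dz p - kmz p * x 4",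
          OF _ D(1)])
       (simp add: Gc_def Let_def)
  moreover have "0 < gz p * EZ p * (x 2)\<^sup>2 * (x 4)\<^sup>2 / (((x 2)\<^sup>2 + As p) * ((x 4)\<^sup>2 + Az p))"
    using assms square_plus_pos[of "As p" "x 2"] square_plus_pos[of "Az p" "x 4"]
    by (simp add: admissible_def)
  ultimately show ?thesis using D(2) by (metis mult_pos_neg)
qed

lemma jac_4_2_pos:
  assumes "admissible p" and "0 < x 2" "0 \<le> x 3" "0 < x 4"
  shows "jac p x 4 2 > 0"
proof -
  let ?C = "gz p * EZ p * (x 4)\<^sup>2 / ((x 4)\<^sup>2 + Az p) * Nz p (x 3)"
  have "jac p x 4 2 = ?C * (2 * As p * x 2 / ((x 2)\<^sup>2 + As p)\<^sup>2)"
  proof (rule jac_eq_affine[where d = "dz p - kmz p * x 4",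
        OF _ has_real_derivative_square_saturation])
    show "0 < As p" using assms(1) by (simp add: admissible_def)
  qed (simp add: Gc_def Let_def divide_inverse mult_ac)
  moreover have "0 < ?C" "0 < 2 * As p * x 2 / ((x 2)\<^sup>2 + As p)\<^sup>2"
    using assms Nz_pos[of p "x 3"] square_plus_pos[of "As p" "x 2"]
      square_plus_pos[of "Az p" "x 4"]
    by (simp_all add: admissible_def)
  ultimately show ?thesis by (metis mult_pos_pos)
qed

lemma reducible_mat_closed_subset:
  assumes "reducible_mat n M"
  obtains S where "S \<subseteq> {1..n}" "S \<noteq> {}" "S \<noteq> {1..n}"
    and "\<And>a b. a \<in> {1..n} \<Longrightarrow> a \<notin> S \<Longrightarrow> b \<in> S \<Longrightarrow> M a b = 0"
proof -
  obtain \<pi> k where \<pi>: "\<pi> permutes {1..n}" and k: "1 \<le> k" "k < n"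
    and zero: "\<And>i j. k < i \<Longrightarrow> i \<le> n \<Longrightarrow> 1 \<le> j \<Longrightarrow> j \<le> k \<Longrightarrow> M (\<pi> i) (\<pi> j) = 0"
    using assms unfolding reducible_mat_def by blast
  show ?thesis
  proof (rule that[of "\<pi> ` {1..k}"])
    have "{1..k} \<subseteq> {1..n}" using k by simp
    then show "\<pi> ` {1..k} \<subseteq> {1..n}"
      using permutes_image[OF \<pi>] by (metis image_mono)
    show "\<pi> ` {1..k} \<noteq> {}" using k by simp
    have "\<pi> n \<in> {1..n}" using k permutes_in_image[OF \<pi>, of n] by simp
    moreover have "\<pi> n \<notin> \<pi> ` {1..k}"
      using k by (simp add: inj_image_mem_iff[OF permutes_inj[OF \<pi>]])
    ultimately show "\<pi> ` {1..k} \<noteq> {1..n}" by blast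
    fix a b assume a: "a \<in> {1..n}" "a \<notin> \<pi> ` {1..k}" and "b \<in> \<pi> ` {1..k}"
    then obtain j where j: "j \<in> {1..k}" "b = \<pi> j" by blast
    from a(1) obtain i where i: "i \<in> {1..n}" "a = \<pi> i"
      using permutes_image[OF \<pi>] by blast
    with a(2) have "k < i" by force
    then show "M a b = 0" using zero i j by simp
  qed
qed

lemma irreducible_matI:
  assumes "\<And>S. S \<subseteq> {1..n} \<Longrightarrow> S \<noteq> {} \<Longrightarrow>
      (\<And>a b. a \<in> {1..n} \<Longrightarrow> b \<in> S \<Longrightarrow> M a b \<noteq> 0 \<Longrightarrow> a \<in> S) \<Longrightarrow> S = {1..n}"
  shows "irreducible_mat n M"
  unfolding irreducible_mat_def
proof
  assume "reducible_mat n M"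
  then obtain S where "S \<subseteq> {1..n}" "S \<noteq> {}" "S \<noteq> {1..n}"
    and "\<And>a b. a \<in> {1..n} \<Longrightarrow> a \<notin> S \<Longrightarrow> b \<in> S \<Longrightarrow> M a b = 0"
    using reducible_mat_closed_subset by blast
  then show False using assms[of S] by blast
qed

lemma irreducible_mat_4I:
  fixes M :: "nat \<Rightarrow> nat \<Rightarrow> real"
  assumes "M 1 2 \<noteq> 0" "M 1 4 \<noteq> 0" "M 2 1 \<noteq> 0" "M 3 2 \<noteq> 0" "M 3 4 \<noteq> 0"
    and "M 4 2 \<noteq> 0" "M 4 3 \<noteq> 0"
  shows "irreducible_mat 4 M"
proof (rule irreducible_matI)
  fix S assume S: "S \<subseteq> {1..4}" "S \<noteq> {}"
    and closed: "\<And>a b. a \<in> {1..4} \<Longrightarrow> b \<in> S \<Longrightarrow> M a b \<noteq> 0 \<Longrightarrow> a \<in> S"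
  have "2 \<in> S"
  proof -
    obtain b where "b \<in> S" "b \<in> {1..4}" using S by blast
    then have "b = 1 \<or> b = 2 \<or> b = 3 \<or> b = 4" by auto
    moreover have "1 \<in> S \<Longrightarrow> 2 \<in> S" "4 \<in> S \<Longrightarrow> 1 \<in> S" "3 \<in> S \<Longrightarrow> 4 \<in> S"
      using closed[of 2 1] closed[of 1 4] closed[of 4 3] assms by simp_all
    ultimately show ?thesis using \<open>b \<in> S\<close> by blast
  qed
  then have "{1, 2, 3, 4} \<subseteq> S" using closed[of 1 2] closed[of 3 2] closed[of 4 2] assms
    by auto
  moreover have "{1..4} = {1, 2, 3, 4 :: nat}" by auto
  ultimately show "S = {1..4}" using S by blast
qed

theorem mainTheorem2:
  fixes p :: params and x :: "nat \<Rightarrow> real"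
  assumes "admissible p"
    and "\<forall>i\<in>{1..4::nat}. 0 < x i"
  shows "(\<forall>i\<in>{1..4::nat}. \<forall>j\<in>{1..4::nat}. (\<lambda>t. Gc p i (x(j := t))) differentiable (at (x j)))
    \<and> jac p x 1 3 = 0 \<and> jac p x 2 3 = 0 \<and> jac p x 2 4 = 0 \<and> jac p x 3 1 = 0 \<and> jac p x 4 1 = 0
    \<and> jac p x 1 2 < 0 \<and> jac p x 1 4 < 0 \<and> jac p x 3 2 < 0 \<and> jac p x 3 4 < 0
    \<and> jac p x 2 1 < 0 \<and> jac p x 4 3 < 0
    \<and> jac p x 4 2 > 0
    \<and> metzler 4 (\<lambda>i j. sigma i * jac p x i j * sigma j)
    \<and> irreducible_mat 4 (jac p x)"
proof -
  have x: "0 \<le> x 1" "0 < x 2" "0 \<le> x 3" "0 < x 4" using assms(2) by (auto intro: less_imp_le)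
  have diff: "\<forall>i\<in>{1..4::nat}. \<forall>j\<in>{1..4::nat}. (\<lambda>t. Gc p i (x(j := t))) differentiable (at (x j))"
    using Gc_partial_differentiable[of p x] assms(1) x by simp
  have neg: "jac p x 1 2 < 0" "jac p x 1 4 < 0" "jac p x 3 2 < 0" "jac p x 3 4 < 0"
      "jac p x 2 1 < 0" "jac p x 4 3 < 0"
    using jac_repression_entries_neg[of p x] jac_2_1_neg[of p x] jac_4_3_neg[of p x] assms(1) x
    by simp_all
  have pos: "jac p x 4 2 > 0" using jac_4_2_pos[of p x] assms(1) x by simp
  have "{1..4::nat} = {1, 2, 3, 4}" by auto
  then have "metzler 4 (\<lambda>i j. sigma i * jac p x i j * sigma j)"
    using jac_structural_zeros neg pos by (simp add: metzler_def sigma_def)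
  moreover have "irreducible_mat 4 (jac p x)"
    using neg pos by (intro irreducible_mat_4I) auto
  ultimately show ?thesis using diff jac_structural_zeros neg pos by simp
qed

end
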